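(* Let $(A,\cdot)$ be an associative algebra over a field $\mathbf{k}$ of characteristic $0$ and $N:A\to A$ a Nijenhuis operator on it. For $n\ge1$ define $\Psi_n:\mathrm{Hom}(A^{\otimes n},A)\to\mathrm{Hom}(A^{\otimes n+1},A)$ by $\Psi_n(f)=(-1)^{n+1}\delta_{\mathrm{Hoch}}f$, where $\delta_{\mathrm{Hoch}}$ is the Hochschild coboundary of $(A,\cdot)$ with adjoint coefficients. Then the maps $\Psi_n$ induce a homomorphism $\Psi:H^n(N)\to H^{n+1}_{\mathrm{Hoch}}(A_N;A_N)$, $[f]\mapsto[\Psi_n(f)]$, from the cohomology of the Nijenhuis operator $N$ to the Hochschild cohomology of the deformed associative algebra $A_N$ with coefficients in itself.
   Context: A Nijenhuis operator: linear $N$ with $N(a)N(b)=N(N(a)b+aN(b)-N(ab))$. The deformed algebra is $A_N=(A,\cdot_N)$ with $a\cdot_Nb=N(a)\cdot b+a\cdot N(b)-N(a\cdot b)$ (associative). $(\delta_{\mathrm{Hoch}}f)(a_1,\dots,a_{n+1})=a_1\cdot f(a_2,\dots,a_{n+1})+\sum_{i=1}^n(-1)^if(a_1,\dots,a_i\cdot a_{i+1},\dots,a_{n+1})+(-1)^{n+1}f(a_1,\dots,a_n)\cdot a_{n+1}$. $H^\bullet_{\mathrm{Hoch}}(A_N;A_N)$ is the Hochschild cohomology of $A_N$ with coefficients in the adjoint bimodule (same formula with $\cdot_N$). $H^\bullet(N)$ is the cohomology of $\{\bigoplus_{n\ge0}\mathrm{Hom}(A^{\otimes n},A),d_N\}$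 where for $n\ge1$: $(d_Nf)(a_1,\dots,a_{n+1})=N(a_1)f(a_2,\dots,a_{n+1})-(-1)^nf(a_1,\dots,a_n)N(a_{n+1})+\sum_{i=1}^n(-1)^if(a_1,\dots,a_{i-1},a_i\cdot_Na_{i+1},\dots,a_{n+1})-N\big((\delta_{\mathrm{Hoch}}f)(a_1,\dots,a_{n+1})\big)$, and for $a\in A$: $d_N(a)(b)=N(b)a-aN(b)-N(ba-ab)$. *)

theory Defs
  imports Main "HOL.Modules"
begin

text \<open>Cochains Hom(A^{\<otimes>n},A) are represented as functions on lists of elements of A,
  only their values on lists of length n being relevant; a 0-cochain g is the element g [].\<close>

definition sgnp :: "nat \<Rightarrow> 'a::ab_group_add \<Rightarrow> 'a" where
  "sgnp i x = (if even i then x else - x)"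

definition multilinear :: "('k \<Rightarrow> 'a::ab_group_add \<Rightarrow> 'a) \<Rightarrow> nat \<Rightarrow> ('a list \<Rightarrow> 'a) \<Rightarrow> bool" where
  "multilinear scale n f \<longleftrightarrow>
     (\<forall>xs. length xs = n \<longrightarrow> (\<forall>i<n. \<forall>x y c.
        f (xs[i := x + y]) = f (xs[i := x]) + f (xs[i := y]) \<and>
        f (xs[i := scale c x]) = scale c (f (xs[i := x]))))"

definition linear_map :: "('k \<Rightarrow> 'a::ab_group_add \<Rightarrow> 'a) \<Rightarrow> ('a \<Rightarrow> 'a) \<Rightarrow> bool" where
  "linear_map scale N \<longleftrightarrow> (\<forall>x y. N (x + y) = N x + N y) \<and> (\<forall>c x. N (scale c x) = scale c (N x))"

definition nijenhuis :: "('k \<Rightarrow> 'a::ring \<Rightarrow> 'a) \<Rightarrow> ('a \<Rightarrow> 'a) \<Rightarrow> bool" where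
  "nijenhuis scale N \<longleftrightarrow> linear_map scale N \<and>
     (\<forall>a b. N a * N b = N (N a * b + a * N b - N (a * b)))"

definition defprod :: "('a::ring \<Rightarrow> 'a) \<Rightarrow> 'a \<Rightarrow> 'a \<Rightarrow> 'a" where
  "defprod N a b = N a * b + a * N b - N (a * b)"

text \<open>Replace a_i, a_{i+1} (1-based index i) by mu a_i a_{i+1}.\<close>
definition merge :: "('a \<Rightarrow> 'a \<Rightarrow> 'a) \<Rightarrow> nat \<Rightarrow> 'a list \<Rightarrow> 'a list" where
  "merge mu i xs = take (i - 1) xs @ mu (xs ! (i - 1)) (xs ! i) # drop (i + 1) xs"

definition hoch :: "('a::ab_group_add \<Rightarrow> 'a \<Rightarrow> 'a) \<Rightarrow> nat \<Rightarrow> ('a list \<Rightarrow> 'a) \<Rightarrow> 'a list \<Rightarrow> 'a" where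
  "hoch mu n f xs = mu (xs ! 0) (f (tl xs))
     + (\<Sum>i\<in>{1..n}. sgnp i (f (merge mu i xs)))
     + sgnp (n + 1) (mu (f (take n xs)) (xs ! n))"

definition dN :: "('a::ring \<Rightarrow> 'a) \<Rightarrow> nat \<Rightarrow> ('a list \<Rightarrow> 'a) \<Rightarrow> 'a list \<Rightarrow> 'a" where
  "dN N n f xs =
    (if n = 0 then
       N (xs ! 0) * f [] - f [] * N (xs ! 0) - N (xs ! 0 * f [] - f [] * xs ! 0)
     else
       N (xs ! 0) * f (tl xs) - sgnp n (f (take n xs) * N (xs ! n))
       + (\<Sum>i\<in>{1..n}. sgnp i (f (merge (defprod N) i xs)))
       - N (hoch (*) n f xs))"

definition Psi :: "nat \<Rightarrow> ('a::ring list \<Rightarrow> 'a) \<Rightarrow> 'a list \<Rightarrow> 'a" where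
  "Psi n f xs = sgnp (n + 1) (hoch (*) n f xs)"

end

theory Submission
  imports Defs
begin

text \<open>The maps \<Psi>_n form a cochain map: the Hochschild coboundary \<delta>_N of A_N satisfies
  \<delta>_N (\<Psi>_n f) = \<Psi>_{n+1} (d_N f), so \<Psi> sends cocycles to cocycles and coboundaries to coboundaries.
  Let D be the Hochschild coboundary of A_N with coefficients in A, on which A_N acts through N.
  Unfolding the definitions, d_N f = D f - N \<circ> \<delta> f and \<delta>_N g = D g + \<delta> (N \<circ> g) - N \<circ> \<delta> g,
  hence \<delta>_N (\<delta> f) + \<delta> (d_N f) = D (\<delta> f) + \<delta> (D f) - N (\<delta> (\<delta> f)).
  Both remaining terms vanish by one cosimplicial computation: the coboundaries of two compatible
  product/action structures anticommute. For (\<cdot>, \<cdot>) this gives 2 \<delta>\<delta> = 0, and for (\<cdot>, \<cdot>_N) it gives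
  D \<delta> + \<delta> D = 0. Compatibility of \<cdot> and \<cdot>_N holds for every linear N.\<close>

lemma sgnp_0 [simp]: "sgnp 0 x = x"
  by (simp add: sgnp_def)

lemma sgnp_Suc [simp]: "sgnp (Suc k) x = - sgnp k x"
  by (simp add: sgnp_def)

lemma sgnp_zero [simp]: "sgnp k 0 = 0"
  by (simp add: sgnp_def)

lemma sgnp_double [simp]: "sgnp (k + k) x = x"
  by (simp add: sgnp_def)

lemma sgnp_add_index: "sgnp (i + j) x = sgnp i (sgnp j x)"
  by (simp add: sgnp_def)

lemma sgnp_commute: "sgnp i (sgnp j x) = sgnp j (sgnp i x)"
  by (simp add: sgnp_def)

lemma sgnp_add: "sgnp k (x + y) = sgnp k x + sgnp k y"
  by (simp add: sgnp_def)

lemma sgnp_minus: "sgnp k (- x) = - sgnp k x"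
  by (simp add: sgnp_def)

lemma sgnp_diff: "sgnp k (x - y) = sgnp k x - sgnp k y"
  by (simp add: sgnp_def)

lemma sgnp_sum: "sgnp k (sum g A) = (\<Sum>a\<in>A. sgnp k (g a))"
  by (simp add: sgnp_def sum_negf)

lemma (in additive) sgnp: "f (sgnp k x) = sgnp k (f x)"
  by (simp add: sgnp_def minus)

lemma signed_double_sum_cancel:
  fixes T1 T2 :: "nat \<Rightarrow> nat \<Rightarrow> 'a::ab_group_add"
  assumes off_diag1: "\<And>a b. a < b \<Longrightarrow> b \<le> n + 1 \<Longrightarrow> T1 a b = T2 (b + 1) a"
    and off_diag2: "\<And>a b. a < b \<Longrightarrow> b \<le> n + 1 \<Longrightarrow> T2 a b = T1 (b + 1) a"
    and diag: "\<And>b. b \<le> n + 1 \<Longrightarrow> T1 b b + T2 b b = T1 (b + 1) b + T2 (b + 1) b"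
  shows "(\<Sum>a\<in>{0..n+2}. \<Sum>b\<in>{0..n+1}. sgnp (a + b) (T1 a b))
       + (\<Sum>a\<in>{0..n+2}. \<Sum>b\<in>{0..n+1}. sgnp (a + b) (T2 a b)) = 0"
proof -
  define Above where "Above = {(a, b). a < b \<and> b \<le> n + 1}"
  define Below where "Below = {(a, b). b + 1 < a \<and> a \<le> n + 2}"
  define Diag where "Diag = {(a, b). a = b \<and> b \<le> n + 1}"
  define Subdiag where "Subdiag = {(a, b). a = b + 1 \<and> b \<le> n + 1}"
  define G1 where "G1 = (\<lambda>(a, b). sgnp (a + b) (T1 a b))"
  define G2 where "G2 = (\<lambda>(a, b). sgnp (a + b) (T2 a b))"
  have rectangle: "{0..n+2} \<times> {0..n+1} = Above \<union> Below \<union> Diag \<union> Subdiag"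
    unfolding Above_def Below_def Diag_def Subdiag_def by auto
  then have "finite (Above \<union> Below \<union> Diag \<union> Subdiag)"
    by (metis finite_SigmaI finite_atLeastAtMost)
  then have fin: "finite Above" "finite Below" "finite Diag" "finite Subdiag"
    by simp_all
  have sum_split: "(\<Sum>a\<in>{0..n+2}. \<Sum>b\<in>{0..n+1}. sgnp (a + b) (T a b))
      = sum G Above + sum G Below + sum G Diag + sum G Subdiag"
    if "G = (\<lambda>(a, b). sgnp (a + b) (T a b))" for T G
    unfolding sum.cartesian_product rectangle that[symmetric] using fin
    by (subst sum.union_disjoint; (auto simp: Above_def Below_def Diag_def Subdiag_def)?)+
  have flip: "bij_betw (\<lambda>(a, b). (b + 1, a)) Above Below"
    by (rule bij_betw_byWitness[where f' = "\<lambda>(a, b). (b, a - 1)"])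
      (auto simp: Above_def Below_def)
  have below_eq: "sum G Below = sum (G \<circ> (\<lambda>(a, b). (b + 1, a))) Above" for G :: "nat \<times> nat \<Rightarrow> 'a"
    using sum.reindex_bij_betw[OF flip, of G] by (simp add: comp_def)
  have below1: "sum G1 Below = - sum G2 Above"
    unfolding below_eq sum_negf[symmetric]
    by (rule sum.cong) (auto simp: Above_def G1_def G2_def off_diag2 sgnp_add_index sgnp_commute sgnp_minus)
  have below2: "sum G2 Below = - sum G1 Above"
    unfolding below_eq sum_negf[symmetric]
    by (rule sum.cong) (auto simp: Above_def G1_def G2_def off_diag1 sgnp_add_index sgnp_commute sgnp_minus)
  have diag_eq: "sum G Diag = (\<Sum>b\<in>{0..n+1}. G (b, b))" for G :: "nat \<times> nat \<Rightarrow> 'a"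
  proof -
    have "Diag = (\<lambda>b. (b, b)) ` {0..n+1}" by (auto simp: Diag_def)
    then show ?thesis by (simp add: sum.reindex inj_on_def)
  qed
  have subdiag_eq: "sum G Subdiag = (\<Sum>b\<in>{0..n+1}. G (b + 1, b))" for G :: "nat \<times> nat \<Rightarrow> 'a"
  proof -
    have "Subdiag = (\<lambda>b. (b + 1, b)) ` {0..n+1}" by (auto simp: Subdiag_def)
    then show ?thesis by (simp add: sum.reindex inj_on_def)
  qed
  have "sum G1 Diag + sum G1 Subdiag + sum G2 Diag + sum G2 Subdiag
      = (\<Sum>b\<in>{0..n+1}. (T1 b b + T2 b b) - (T1 (b + 1) b + T2 (b + 1) b))"
    unfolding diag_eq subdiag_eq G1_def G2_def
    by (simp add: sum.distrib sum_subtractf sum_negf algebra_simps)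
  also have "\<dots> = 0"
    by (rule sum.neutral) (simp add: diag)
  finally have "sum G1 Diag + sum G1 Subdiag + sum G2 Diag + sum G2 Subdiag = 0" .
  with below1 below2 show ?thesis
    unfolding sum_split[OF G1_def] sum_split[OF G2_def] by (simp add: algebra_simps)
qed

lemma length_merge [simp]: "1 \<le> k \<Longrightarrow> k < length xs \<Longrightarrow> length (merge mu k xs) = length xs - 1"
  by (simp add: merge_def)

lemma nth_merge:
  "1 \<le> k \<Longrightarrow> k < length xs \<Longrightarrow> j < length xs - 1 \<Longrightarrow>
   merge mu k xs ! j = (if j < k - 1 then xs ! j else if j = k - 1 then mu (xs ! (k - 1)) (xs ! k)
     else xs ! (j + 1))"
  by (auto simp: merge_def nth_append min_def nth_Cons')

lemma nth_merge_beyond: "1 \<le> k \<Longrightarrow> k \<le> n \<Longrightarrow> n + 1 < length xs \<Longrightarrow> merge mu k xs ! n = xs ! (n + 1)"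
  by (subst nth_merge) auto

lemma tl_merge: "2 \<le> k \<Longrightarrow> k < length xs \<Longrightarrow> tl (merge mu k xs) = merge mu (k - 1) (tl xs)"
  by (rule nth_equalityI) (auto simp: nth_merge nth_tl)

lemma tl_merge_1: "1 < length xs \<Longrightarrow> tl (merge mu 1 xs) = tl (tl xs)"
  by (rule nth_equalityI) (auto simp: nth_merge nth_tl)

lemma take_merge:
  "1 \<le> k \<Longrightarrow> k \<le> n \<Longrightarrow> n + 1 < length xs \<Longrightarrow> take n (merge mu k xs) = merge mu k (take (n + 1) xs)"
  by (rule nth_equalityI) (auto simp: nth_merge)

lemma take_merge_last: "length xs = n + 2 \<Longrightarrow> take n (merge mu (n + 1) xs) = take n xs"
  by (rule nth_equalityI) (auto simp: nth_merge)

lemma merge_merge: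
  "1 \<le> a \<Longrightarrow> a < b \<Longrightarrow> b + 1 < length xs \<Longrightarrow>
   merge m2 b (merge m1 a xs) = merge m1 a (merge m2 (b + 1) xs)"
  by (rule nth_equalityI) (auto simp: nth_merge)

lemma merge_merge_same:
  "1 \<le> b \<Longrightarrow> b + 1 < length xs \<Longrightarrow>
   merge m2 b (merge m1 b xs) = take (b - 1) xs @ m2 (m1 (xs ! (b - 1)) (xs ! b)) (xs ! (b + 1)) # drop (b + 2) xs"
  by (rule nth_equalityI) (auto simp: nth_merge nth_append nth_Cons')

lemma merge_merge_Suc:
  "1 \<le> b \<Longrightarrow> b + 1 < length xs \<Longrightarrow>
   merge m2 b (merge m1 (b + 1) xs) = take (b - 1) xs @ m2 (xs ! (b - 1)) (m1 (xs ! b) (xs ! (b + 1))) # drop (b + 2) xs"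
  by (rule nth_equalityI) (auto simp: nth_merge nth_append nth_Cons')

definition multiadditive :: "nat \<Rightarrow> ('a::ab_group_add list \<Rightarrow> 'b::ab_group_add) \<Rightarrow> bool" where
  "multiadditive n f \<longleftrightarrow> (\<forall>us vs p q. length us + length vs + 1 = n \<longrightarrow>
     f (us @ (p + q) # vs) = f (us @ p # vs) + f (us @ q # vs))"

lemma multilinear_imp_multiadditive:
  fixes f :: "'a::ab_group_add list \<Rightarrow> 'a"
  shows "multilinear scale n f \<Longrightarrow> multiadditive n f"
  unfolding multiadditive_def
proof (intro allI impI)
  fix us vs :: "'a list" and p q assume f: "multilinear scale n f" and len: "length us + length vs + 1 = n"
  have "length (us @ 0 # vs) = n" "length us < n"
    using len by simp_all
  with f have "f ((us @ 0 # vs)[length us := p + q])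
      = f ((us @ 0 # vs)[length us := p]) + f ((us @ 0 # vs)[length us := q])"
    unfolding multilinear_def by blast
  then show "f (us @ (p + q) # vs) = f (us @ p # vs) + f (us @ q # vs)"
    by simp
qed

text \<open>The Hochschild coboundary of an n-cochain f on A with values in a bimodule M:
  m is the product of A, and L, R are the left and right actions of A on M.\<close>

definition hoch_gen :: "('a \<Rightarrow> 'b \<Rightarrow> 'b) \<Rightarrow> ('a \<Rightarrow> 'a \<Rightarrow> 'a) \<Rightarrow> ('b \<Rightarrow> 'a \<Rightarrow> 'b) \<Rightarrow> nat
    \<Rightarrow> ('a list \<Rightarrow> 'b) \<Rightarrow> 'a list \<Rightarrow> 'b::ab_group_add" where
  "hoch_gen L m R n f xs = L (xs ! 0) (f (tl xs)) + (\<Sum>i\<in>{1..n}. sgnp i (f (merge m i xs)))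
     + sgnp (n + 1) (R (f (take n xs)) (xs ! n))"

definition coface :: "('a \<Rightarrow> 'b \<Rightarrow> 'b) \<Rightarrow> ('a \<Rightarrow> 'a \<Rightarrow> 'a) \<Rightarrow> ('b \<Rightarrow> 'a \<Rightarrow> 'b) \<Rightarrow> nat \<Rightarrow> nat
    \<Rightarrow> ('a list \<Rightarrow> 'b) \<Rightarrow> 'a list \<Rightarrow> 'b" where
  "coface L m R n k f xs =
    (if k = 0 then L (xs ! 0) (f (tl xs))
     else if k \<le> n then f (merge m k xs)
     else R (f (take n xs)) (xs ! n))"

lemma hoch_eq_hoch_gen: "hoch mu n f = hoch_gen mu mu mu n f"
  by (rule ext) (simp add: hoch_def hoch_gen_def)

lemma hoch_gen_eq_sum_coface:
  "hoch_gen L m R n f xs = (\<Sum>k\<in>{0..n+1}. sgnp k (coface L m R n k f xs))"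
proof -
  have "(\<Sum>k\<in>{1..n}. sgnp k (coface L m R n k f xs)) = (\<Sum>i\<in>{1..n}. sgnp i (f (merge m i xs)))"
    by (rule sum.cong) (auto simp: coface_def)
  then show ?thesis
    by (simp add: hoch_gen_def sum.atLeast_Suc_atMost coface_def)
qed

lemma coface_sum:
  assumes "\<And>a. additive (L a)" "\<And>b. additive (\<lambda>u. R u b)"
  shows "coface L m R n k (\<lambda>ys. \<Sum>b\<in>B. sgnp b (g b ys)) xs = (\<Sum>b\<in>B. sgnp b (coface L m R n k (g b) xs))"
  by (simp add: coface_def additive.sum[OF assms(1)] additive.sgnp[OF assms(1)]
      additive.sum[OF assms(2)] additive.sgnp[OF assms(2)])

lemma coface_coface_less:
  assumes LR: "\<And>a u b. L1 a (R2 u b) = R2 (L1 a u) b"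
    and ab: "a < b" "b \<le> n + 1" and len: "length xs = n + 2"
  shows "coface L1 m1 R1 (n + 1) a (coface L2 m2 R2 n b f) xs
       = coface L2 m2 R2 (n + 1) (b + 1) (coface L1 m1 R1 n a f) xs"
proof -
  consider "a = 0" "b \<le> n" | "a = 0" "b = n + 1" | "a \<ge> 1" "b \<le> n" | "a \<ge> 1" "b = n + 1"
    using ab by linarith
  then show ?thesis
  proof cases
    case 1
    then show ?thesis using ab len by (simp add: coface_def tl_merge nth_merge)
  next
    case 2
    then show ?thesis using len by (simp add: coface_def LR nth_tl tl_take)
  next
    case 3
    then show ?thesis using ab len by (simp add: coface_def merge_merge)
  next
    case 4
    then show ?thesis using ab len by (simp add: coface_def take_merge nth_merge_beyond)
  qed
qed

lemma coface_coface_diag: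
  assumes LL: "\<And>a b u. L1 a (L2 b u) + L2 a (L1 b u) = L2 (m1 a b) u + L1 (m2 a b) u"
    and mm: "\<And>a b c. m2 (m1 a b) c + m1 (m2 a b) c = m2 a (m1 b c) + m1 a (m2 b c)"
    and RR: "\<And>u a b. R2 u (m1 a b) + R1 u (m2 a b) = R1 (R2 u a) b + R2 (R1 u a) b"
    and f: "multiadditive n f"
    and b: "b \<le> n + 1" and len: "length xs = n + 2"
  shows "coface L1 m1 R1 (n + 1) b (coface L2 m2 R2 n b f) xs
       + coface L2 m2 R2 (n + 1) b (coface L1 m1 R1 n b f) xs
     = coface L1 m1 R1 (n + 1) (b + 1) (coface L2 m2 R2 n b f) xs
       + coface L2 m2 R2 (n + 1) (b + 1) (coface L1 m1 R1 n b f) xs"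
proof -
  consider "b = 0" | "1 \<le> b" "b \<le> n" | "b = n + 1"
    using b by linarith
  then show ?thesis
  proof cases
    case 1
    then show ?thesis using len tl_merge_1[of xs m1] tl_merge_1[of xs m2]
      by (simp add: coface_def nth_tl nth_merge LL)
  next
    case 3
    then show ?thesis using len by (simp add: coface_def take_merge_last[OF len, simplified] nth_merge RR)
  next
    case 2
    define us where "us = take (b - 1) xs"
    define vs where "vs = drop (b + 2) xs"
    define x y z where "x = xs ! (b - 1)" and "y = xs ! b" and "z = xs ! (b + 1)"
    have slot: "length us + length vs + 1 = n"
      using 2 len by (simp add: us_def vs_def)
    have "coface L1 m1 R1 (n + 1) b (coface L2 m2 R2 n b f) xs
        + coface L2 m2 R2 (n + 1) b (coface L1 m1 R1 n b f) xs
      = f (us @ (m2 (m1 x y) z + m1 (m2 x y) z) # vs)"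
      using 2 len f slot
      by (simp add: coface_def merge_merge_same us_def vs_def x_def y_def z_def multiadditive_def)
    also have "\<dots> = f (us @ (m2 x (m1 y z) + m1 x (m2 y z)) # vs)"
      by (simp add: mm)
    also have "\<dots> = coface L1 m1 R1 (n + 1) (b + 1) (coface L2 m2 R2 n b f) xs
        + coface L2 m2 R2 (n + 1) (b + 1) (coface L1 m1 R1 n b f) xs"
      using 2 len f slot
      by (simp add: coface_def merge_merge_Suc[simplified] us_def vs_def x_def y_def z_def multiadditive_def)
    finally show ?thesis .
  qed
qed

text \<open>LL, mm and RR are the cross terms of the bimodule axioms for the sum of the two
  structures (L1 + L2, m1 + m2, R1 + R2).\<close>

lemma hoch_gen_anticommute:
  assumes add_L1: "\<And>a. additive (L1 a)" and add_L2: "\<And>a. additive (L2 a)"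
    and add_R1: "\<And>b. additive (\<lambda>u. R1 u b)" and add_R2: "\<And>b. additive (\<lambda>u. R2 u b)"
    and L1R2: "\<And>a u b. L1 a (R2 u b) = R2 (L1 a u) b"
    and L2R1: "\<And>a u b. L2 a (R1 u b) = R1 (L2 a u) b"
    and LL: "\<And>a b u. L1 a (L2 b u) + L2 a (L1 b u) = L2 (m1 a b) u + L1 (m2 a b) u"
    and mm: "\<And>a b c. m2 (m1 a b) c + m1 (m2 a b) c = m2 a (m1 b c) + m1 a (m2 b c)"
    and RR: "\<And>u a b. R2 u (m1 a b) + R1 u (m2 a b) = R1 (R2 u a) b + R2 (R1 u a) b"
    and f: "multiadditive n f"
    and len: "length xs = n + 2"
  shows "hoch_gen L1 m1 R1 (n + 1) (hoch_gen L2 m2 R2 n f) xs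
       + hoch_gen L2 m2 R2 (n + 1) (hoch_gen L1 m1 R1 n f) xs = 0"
proof -
  have double_sum: "hoch_gen L m R (n + 1) (hoch_gen L' m' R' n f) xs
     = (\<Sum>a\<in>{0..n+2}. \<Sum>b\<in>{0..n+1}. sgnp (a + b) (coface L m R (n + 1) a (coface L' m' R' n b f) xs))"
    if "\<And>a. additive (L a)" "\<And>b. additive (\<lambda>u. R u b)" for L m R L' m' R'
  proof -
    have "hoch_gen L' m' R' n f = (\<lambda>ys. \<Sum>b\<in>{0..n+1}. sgnp b (coface L' m' R' n b f ys))"
      by (rule ext) (rule hoch_gen_eq_sum_coface)
    then show ?thesis
      by (simp only: hoch_gen_eq_sum_coface[of L m R] coface_sum[OF that] sgnp_sum sgnp_add_index add.assoc one_add_one)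
  qed
  show ?thesis
    unfolding double_sum[OF add_L1 add_R1] double_sum[OF add_L2 add_R2]
  proof (rule signed_double_sum_cancel)
    fix a b assume "a < b" "b \<le> n + 1"
    show "coface L1 m1 R1 (n + 1) a (coface L2 m2 R2 n b f) xs
      = coface L2 m2 R2 (n + 1) (b + 1) (coface L1 m1 R1 n a f) xs"
      by (rule coface_coface_less) (fact L1R2 \<open>a < b\<close> \<open>b \<le> n + 1\<close> len)+
    show "coface L2 m2 R2 (n + 1) a (coface L1 m1 R1 n b f) xs
      = coface L1 m1 R1 (n + 1) (b + 1) (coface L2 m2 R2 n a f) xs"
      by (rule coface_coface_less) (fact L2R1 \<open>a < b\<close> \<open>b \<le> n + 1\<close> len)+
  next
    fix b assume "b \<le> n + 1"
    show "coface L1 m1 R1 (n + 1) b (coface L2 m2 R2 n b f) xs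
        + coface L2 m2 R2 (n + 1) b (coface L1 m1 R1 n b f) xs
      = coface L1 m1 R1 (n + 1) (b + 1) (coface L2 m2 R2 n b f) xs
        + coface L2 m2 R2 (n + 1) (b + 1) (coface L1 m1 R1 n b f) xs"
      by (rule coface_coface_diag) (fact LL mm RR f \<open>b \<le> n + 1\<close> len)+
  qed
qed

lemma additive_left_mult: "additive (\<lambda>u. a * u :: 'a::ring)"
  by unfold_locales (simp add: distrib_left)

lemma additive_right_mult: "additive (\<lambda>u. u * b :: 'a::ring)"
  by unfold_locales (simp add: distrib_right)

text \<open>Anticommuting the coboundary with itself only gives twice its square, hence the
  hypothesis that A has no 2-torsion.\<close>

lemma hoch_hoch_eq_0:
  fixes f :: "'a::ring list \<Rightarrow> 'a"
  assumes no_2_torsion: "\<And>y::'a. y + y = 0 \<Longrightarrow> y = 0"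
    and f: "multiadditive n f" and len: "length xs = n + 2"
  shows "hoch (*) (n + 1) (hoch (*) n f) xs = 0"
proof (rule no_2_torsion)
  show "hoch (*) (n + 1) (hoch (*) n f) xs + hoch (*) (n + 1) (hoch (*) n f) xs = 0"
    unfolding hoch_eq_hoch_gen
    by (rule hoch_gen_anticommute[OF _ _ _ _ _ _ _ _ _ f len])
      (simp_all add: additive_left_mult additive_right_mult algebra_simps)
qed

text \<open>If N is a Nijenhuis operator, then A is an A_N-bimodule via a \<triangleright> u = N a * u and
  u \<triangleleft> b = u * N b; this is the Hochschild coboundary of A_N with coefficients in it.\<close>

definition hoch_twisted :: "('a::ring \<Rightarrow> 'a) \<Rightarrow> nat \<Rightarrow> ('a list \<Rightarrow> 'a) \<Rightarrow> 'a list \<Rightarrow> 'a" where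
  "hoch_twisted N = hoch_gen (\<lambda>a u. N a * u) (defprod N) (\<lambda>u b. u * N b)"

lemma hoch_twisted_anticommute:
  fixes f :: "'a::ring list \<Rightarrow> 'a"
  assumes f: "multiadditive n f" and len: "length xs = n + 2"
  shows "hoch_twisted N (n + 1) (hoch (*) n f) xs + hoch (*) (n + 1) (hoch_twisted N n f) xs = 0"
  unfolding hoch_twisted_def hoch_eq_hoch_gen
  by (rule hoch_gen_anticommute[OF _ _ _ _ _ _ _ _ _ f len])
    (simp_all add: additive_left_mult additive_right_mult defprod_def algebra_simps)

lemma dN_eq_hoch_twisted:
  assumes "additive N" and "length ys = n + 1"
  shows "dN N n f ys = hoch_twisted N n f ys - N (hoch (*) n f ys)"
proof (cases "n = 0")
  case True
  with assms(2) obtain y where "ys = [y]"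
    by (cases ys) auto
  with True show ?thesis
    by (simp add: dN_def hoch_twisted_def hoch_gen_def hoch_def)
next
  case False
  then show ?thesis
    by (simp add: dN_def hoch_twisted_def hoch_gen_def hoch_def)
qed

lemma hoch_defprod_eq:
  assumes N: "additive N"
  shows "hoch (defprod N) n g xs
    = hoch_twisted N n g xs + hoch (*) n (\<lambda>ys. N (g ys)) xs - N (hoch (*) n g xs)"
  by (simp add: hoch_def hoch_twisted_def hoch_gen_def defprod_def additive.add[OF N] additive.diff[OF N]
      additive.sum[OF N] additive.sgnp[OF N] sgnp_add sgnp_diff sum.distrib sum_subtractf algebra_simps)

lemma hoch_cong:
  assumes "length xs = n + 1" and "\<And>ys. length ys = n \<Longrightarrow> g ys = g' ys"
  shows "hoch mu n g xs = hoch mu n g' xs"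
proof -
  have "(\<Sum>i\<in>{1..n}. sgnp i (g (merge mu i xs))) = (\<Sum>i\<in>{1..n}. sgnp i (g' (merge mu i xs)))"
    by (rule sum.cong) (use assms in auto)
  with assms show ?thesis
    by (simp add: hoch_def)
qed

lemma hoch_diff: "hoch (*) n (\<lambda>ys. g ys - h ys) xs = hoch (*) n g xs - (hoch (*) n h xs :: 'a::ring)"
  by (simp add: hoch_def sum_subtractf sgnp_diff algebra_simps)

lemma hoch_uminus:
  assumes "\<And>a u. mu a (- u) = - mu a u" and "\<And>u b. mu (- u) b = - mu u b"
  shows "hoch mu n (\<lambda>ys. - g ys) xs = - hoch mu n g xs"
  by (simp add: hoch_def assms sgnp_minus sum_negf)

lemma hoch_sgnp:
  assumes "\<And>a u. mu a (- u) = - mu a u" and "\<And>u b. mu (- u) b = - mu u b"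
  shows "hoch mu n (\<lambda>ys. sgnp k (g ys)) xs = sgnp k (hoch mu n g xs)"
  by (cases "even k") (simp_all add: sgnp_def hoch_uminus assms)

lemma defprod_minus_left: "additive N \<Longrightarrow> defprod N (- a) b = - defprod N a b"
  by (simp add: defprod_def additive.minus)

lemma defprod_minus_right: "additive N \<Longrightarrow> defprod N a (- b) = - defprod N a b"
  by (simp add: defprod_def additive.minus)

lemma hoch_defprod_hoch_add_hoch_dN:
  fixes f :: "'a::ring list \<Rightarrow> 'a"
  assumes N: "additive N" and no_2_torsion: "\<And>y::'a. y + y = 0 \<Longrightarrow> y = 0"
    and f: "multiadditive n f" and len: "length xs = n + 2"
  shows "hoch (defprod N) (n + 1) (hoch (*) n f) xs + hoch (*) (n + 1) (dN N n f) xs = 0"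
proof -
  let ?\<delta>f = "hoch (*) n f" and ?Df = "hoch_twisted N n f"
  have "hoch (*) (n + 1) (dN N n f) xs = hoch (*) (n + 1) (\<lambda>ys. ?Df ys - N (?\<delta>f ys)) xs"
    using len by (intro hoch_cong) (simp_all add: dN_eq_hoch_twisted[OF N])
  also have "\<dots> = hoch (*) (n + 1) ?Df xs - hoch (*) (n + 1) (\<lambda>ys. N (?\<delta>f ys)) xs"
    by (rule hoch_diff)
  finally have "hoch (defprod N) (n + 1) ?\<delta>f xs + hoch (*) (n + 1) (dN N n f) xs
      = hoch_twisted N (n + 1) ?\<delta>f xs + hoch (*) (n + 1) ?Df xs - N (hoch (*) (n + 1) ?\<delta>f xs)"
    by (simp add: hoch_defprod_eq[OF N])
  also have "\<dots> = 0"
    using hoch_twisted_anticommute[OF f len] hoch_hoch_eq_0[OF no_2_torsion f len] additive.zero[OF N]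
    by simp
  finally show ?thesis .
qed

lemma hoch_defprod_Psi:
  fixes f :: "'a::ring list \<Rightarrow> 'a"
  assumes N: "additive N" and no_2_torsion: "\<And>y::'a. y + y = 0 \<Longrightarrow> y = 0"
    and f: "multiadditive n f" and len: "length xs = n + 2"
  shows "hoch (defprod N) (n + 1) (Psi n f) xs = Psi (n + 1) (dN N n f) xs"
proof -
  have "Psi n f = (\<lambda>ys. sgnp (n + 1) (hoch (*) n f ys))"
    by (simp add: Psi_def[abs_def])
  then have "hoch (defprod N) (n + 1) (Psi n f) xs
      = sgnp (n + 1) (hoch (defprod N) (n + 1) (hoch (*) n f) xs)"
    by (simp only:) (rule hoch_sgnp; simp add: defprod_minus_left defprod_minus_right N)
  also have "hoch (defprod N) (n + 1) (hoch (*) n f) xs = - hoch (*) (n + 1) (dN N n f) xs"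
    using hoch_defprod_hoch_add_hoch_dN[OF N no_2_torsion f len] by (simp add: eq_neg_iff_add_eq_0)
  also have "sgnp (n + 1) (- hoch (*) (n + 1) (dN N n f) xs) = Psi (n + 1) (dN N n f) xs"
    by (simp add: Psi_def sgnp_minus)
  finally show ?thesis .
qed

lemma (in module_pair) module_hom_sgnp: "module_hom s1 s2 f \<Longrightarrow> module_hom s1 s2 (\<lambda>x. sgnp k (f x))"
  by (cases "even k") (simp_all add: sgnp_def module_hom_neg)

lemma merge_list_update:
  assumes "1 \<le> k" "k < length xs" "i < length xs"
  shows "merge mu k (xs[i := v]) = (merge mu k xs)[(if i < k then i else i - 1) :=
    (if i = k - 1 then mu v (xs ! k) else if i = k then mu (xs ! (k - 1)) v else v)]"
proof -
  consider "i < k - 1" | "i = k - 1" | "i = k" | "k < i"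
    by linarith
  then show ?thesis
    by cases (use assms in \<open>auto intro!: nth_equalityI simp: nth_merge nth_list_update\<close>)
qed

locale assoc_algebra = module scale
  for scale :: "'k::comm_ring_1 \<Rightarrow> 'a::ring \<Rightarrow> 'a" +
  assumes scale_mult_left: "scale c (a * b) = scale c a * b"
    and scale_mult_right: "scale c (a * b) = a * scale c b"
begin

sublocale hom: module_pair scale scale
  by (simp add: module_pair_def module_axioms)

lemma multilinear_iff_module_hom:
  "multilinear scale n f \<longleftrightarrow> (\<forall>xs. length xs = n \<longrightarrow> (\<forall>i<n. module_hom scale scale (\<lambda>v. f (xs[i := v]))))"
  by (auto simp: multilinear_def module_hom_iff module_axioms)

lemma module_hom_slot:
  "multilinear scale n f \<Longrightarrow> length xs = n \<Longrightarrow> i < n \<Longrightarrow> module_hom scale scale (\<lambda>v. f (xs[i := v]))"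
  by (simp add: multilinear_iff_module_hom)

lemma module_hom_mult_left: "module_hom scale scale (\<lambda>v. a * v)"
  by (simp add: module_hom_iff module_axioms distrib_left scale_mult_right)

lemma module_hom_mult_right: "module_hom scale scale (\<lambda>v. v * b)"
  by (simp add: module_hom_iff module_axioms distrib_right scale_mult_left)

lemma module_hom_merge_slot:
  assumes f: "multilinear scale n f" and k: "1 \<le> k" "k \<le> n"
    and len: "length xs = n + 1" and i: "i < n + 1"
  shows "module_hom scale scale (\<lambda>v. f (merge (*) k (xs[i := v])))"
proof -
  define j where "j = (if i < k then i else i - 1)"
  define \<phi> where "\<phi> v = (if i = k - 1 then v * xs ! k else if i = k then xs ! (k - 1) * v else v)" for v
  have "\<phi> = (if i = k - 1 then (\<lambda>v. v * xs ! k) else if i = k then (\<lambda>v. xs ! (k - 1) * v) else (\<lambda>v. v))"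
    by (auto simp: \<phi>_def)
  then have "module_hom scale scale \<phi>"
    by (simp add: module_hom_mult_left module_hom_mult_right module_hom_ident)
  moreover have "module_hom scale scale (\<lambda>w. f ((merge (*) k xs)[j := w]))"
    using k len i by (intro module_hom_slot[OF f]) (auto simp: j_def)
  moreover have "(\<lambda>v. f (merge (*) k (xs[i := v]))) = (\<lambda>w. f ((merge (*) k xs)[j := w])) \<circ> \<phi>"
    using k len i by (simp add: merge_list_update comp_def j_def \<phi>_def)
  ultimately show ?thesis
    by (simp add: module_hom_compose)
qed

lemma hoch_multilinear:
  assumes f: "multilinear scale n f"
  shows "multilinear scale (n + 1) (hoch (*) n f)"
  unfolding multilinear_iff_module_hom
proof (intro allI impI)
  fix xs :: "'a list" and i assume len: "length xs = n + 1" and i: "i < n + 1"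
  have first: "module_hom scale scale (\<lambda>v. xs[i := v] ! 0 * f (tl (xs[i := v])))"
  proof (cases i)
    case 0
    with len have "(\<lambda>v. xs[i := v] ! 0 * f (tl (xs[i := v]))) = (\<lambda>v. v * f (tl xs))"
      by (cases xs) auto
    then show ?thesis
      by (simp add: module_hom_mult_right)
  next
    case (Suc j)
    with len have "(\<lambda>v. xs[i := v] ! 0 * f (tl (xs[i := v]))) = (\<lambda>v. xs ! 0 * f ((tl xs)[j := v]))"
      by (cases xs) auto
    with module_hom_compose[OF module_hom_slot[OF f] module_hom_mult_left] Suc len i show ?thesis
      by (simp add: comp_def)
  qed
  have middle: "module_hom scale scale (\<lambda>v. \<Sum>k\<in>{1..n}. sgnp k (f (merge (*) k (xs[i := v]))))"
    using f len i by (intro hom.module_hom_sum hom.module_hom_sgnp module_hom_merge_slot) (auto simp: module_axioms)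
  have last: "module_hom scale scale (\<lambda>v. sgnp (n + 1) (f (take n (xs[i := v])) * xs[i := v] ! n))"
  proof (rule hom.module_hom_sgnp, cases "i = n")
    case True
    with len show "module_hom scale scale (\<lambda>v. f (take n (xs[i := v])) * xs[i := v] ! n)"
      by (simp add: module_hom_mult_left)
  next
    case False
    with len i have "(\<lambda>v. f (take n (xs[i := v])) * xs[i := v] ! n) = (\<lambda>v. f ((take n xs)[i := v]) * xs ! n)"
      by (simp add: take_update_swap)
    with module_hom_compose[OF module_hom_slot[OF f] module_hom_mult_right] False len i
    show "module_hom scale scale (\<lambda>v. f (take n (xs[i := v])) * xs[i := v] ! n)"
      by (simp add: comp_def)
  qed
  show "module_hom scale scale (\<lambda>v. hoch (*) n f (xs[i := v]))"
    unfolding hoch_def by (intro hom.module_hom_add first middle last)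
qed

lemma Psi_multilinear:
  assumes "multilinear scale n f"
  shows "multilinear scale (n + 1) (Psi n f)"
  using hoch_multilinear[OF assms]
  by (simp add: multilinear_iff_module_hom Psi_def hom.module_hom_sgnp del: sgnp_Suc)

end

lemma add_self_eq_0_imp_eq_0:
  fixes scale :: "'k::field_char_0 \<Rightarrow> 'a::ab_group_add \<Rightarrow> 'a" and y :: 'a
  assumes "module scale" and "y + y = 0"
  shows "y = 0"
proof -
  interpret module scale by fact
  have "y = scale (1/2 + 1/2) y" by simp
  also have "\<dots> = scale (1/2) (y + y)" by (simp only: scale_left_distrib scale_right_distrib)
  finally show ?thesis using assms(2) by simp
qed

theorem theorem2p17:
  fixes scale :: "'k::field_char_0 \<Rightarrow> 'a::ring \<Rightarrow> 'a"
    and N :: "'a \<Rightarrow> 'a" and n :: nat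
  assumes "module scale"
    and "\<forall>c a b. scale c (a * b) = scale c a * b"
    and "\<forall>c a b. scale c (a * b) = a * scale c b"
    and "nijenhuis scale N"
    and "n \<ge> 1"
  shows "(\<forall>f. multilinear scale n f \<longrightarrow> multilinear scale (n + 1) (Psi n f))
    \<and> (\<forall>f. multilinear scale n f \<longrightarrow> (\<forall>xs. length xs = n + 1 \<longrightarrow> dN N n f xs = 0) \<longrightarrow>
          (\<forall>xs. length xs = n + 2 \<longrightarrow> hoch (defprod N) (n + 1) (Psi n f) xs = 0))
    \<and> (\<forall>g. multilinear scale (n - 1) g \<longrightarrow>
          (\<exists>h. multilinear scale n h \<and>
             (\<forall>xs. length xs = n + 1 \<longrightarrow> Psi n (dN N (n - 1) g) xs = hoch (defprod N) n h xs)))"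
proof -
  interpret assoc_algebra scale
    using assms(1-3) by (simp add: assoc_algebra_def assoc_algebra_axioms_def)
  have N: "additive N"
    using assms(4) by unfold_locales (simp add: nijenhuis_def linear_map_def)
  have cochain_map: "hoch (defprod N) (m + 1) (Psi m f) xs = Psi (m + 1) (dN N m f) xs"
    if "multilinear scale m f" "length xs = m + 2" for m f xs
    using add_self_eq_0_imp_eq_0[OF assms(1)] multilinear_imp_multiadditive[OF that(1)] that(2)
    by (rule hoch_defprod_Psi[OF N])
  show ?thesis
  proof (intro conjI allI impI)
    fix f assume "multilinear scale n f"
    then show "multilinear scale (n + 1) (Psi n f)"
      by (rule Psi_multilinear)
  next
    fix f and xs :: "'a list"
    assume f: "multilinear scale n f" and cocycle: "\<forall>xs. length xs = n + 1 \<longrightarrow> dN N n f xs = 0"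
      and len: "length xs = n + 2"
    have "hoch (*) (n + 1) (dN N n f) xs = hoch (*) (n + 1) (\<lambda>_. 0) xs"
      using len cocycle by (intro hoch_cong) simp_all
    with cochain_map[OF f len] show "hoch (defprod N) (n + 1) (Psi n f) xs = 0"
      by (simp add: Psi_def hoch_def)
  next
    fix g assume g: "multilinear scale (n - 1) g"
    show "\<exists>h. multilinear scale n h \<and>
      (\<forall>xs. length xs = n + 1 \<longrightarrow> Psi n (dN N (n - 1) g) xs = hoch (defprod N) n h xs)"
      using Psi_multilinear[OF g] cochain_map[OF g] \<open>n \<ge> 1\<close> by auto
  qed
qed

end
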